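(* Let $(M^n,c,v^m d\nu)$ be a smooth conformal measure space with characteristic constant $\mu$, $n\ge3$, $m\in\mathbb{R}\setminus\{-n,1-n,2-n\}$. Then, in any scale, for every vector $x$ and tractor $I$, $$\nabla^W_xI=\nabla_xI+\frac{mv^{-1}}{m+n-2}\,I\lrcorner\big(B_x\wedge X\big),\qquad B_x=\nabla_xJ+\frac{\mu-(m-1)|J|^2}{2(m+n-1)v}\nabla_xX,$$ where $\nabla$ is the normal tractor connection and $K\lrcorner(I_1\wedge I_2)=\langle I_1,K\rangle I_2-\langle I_2,K\rangle I_1$. In particular, $\nabla^W$ is well defined (independent of the choice of scale) as an operator $\mathcal{T}\to T^*M\otimes\mathcal{T}$.
   Context: Conformal setting: $(M^n,c)$ a manifold with a conformal class of Riemannian metrics. $\mathcal{E}[w]$: conformal densities of weight $w$ (functions in a scale $g\in c$, multiplied by $e^{ws}$ under $g\mapsto e^{2s}g$). Standard tractor bundle $\mathbb{T}$: in a scale $\mathbb{T}\cong\mathbb{R}\oplus TM\oplus\mathbb{R}$, tractor $I$ with top $\sigma$, middle $\omega$ (vector field), bottom $\rho$, transforming as $\sigma\mapsto e^{s}\sigma$, $\omega\mapsto e^{-s}(\omega+\sigma\nabla s)$, $\rho\mapsto e^{-s}(\rho-g(\nabla s,\omega)-\tfrac12|\nabla s|^2\sigma)$. Tractor metric $\langle I,I\rangle=2\sigma\rho+|\omega|_g^2$. $X$: top and middle $0$, bottom $1$ (weight 1). Schouten $P=\frac1{n-2}(\mathrm{Ric}-\mathrm{J}g)$, $\mathrm{J}=\operatorname{tr}P$.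 Normal tractor connection: $\nabla_xI$ has top $x\sigma-g(\omega,x)$, middle $\nabla_x\omega+\sigma P(x)+\rho x$, bottom $x\rho-P(x,\omega)$ ($P(x)$ dual to $P(x,\cdot)$); it is scale-independent. Tractor-$D$: $\mathbb{D}v$ for $v\in\mathcal{E}[1]$ has top $nv$, middle $n\nabla v$, bottom $-(\Delta v+\mathrm{J}v)$. SCMS: positive $v\in\mathcal{E}[1]$, $m\in\mathbb{R}$, fixed constant $\mu$; in a scale $v$ is a positive function. $\mathrm{Ric}^m_\phi=\mathrm{Ric}-mv^{-1}\nabla^2v$, $R^m_\phi=R-2mv^{-1}\Delta v-m(m-1)v^{-2}|\nabla v|^2$, $\mathrm{J}^W=\frac{1}{2(m+n-1)}(R^m_\phi+m\mu v^{-2})$, $P^W=\frac{1}{m+n-2}(\mathrm{Ric}^m_\phi-\mathrm{J}^Wg)$. $J=\frac1n\mathbb{D}v$. The $W$-tractor connection is defined in each scale by: $\nabla^W_xI$ has top $x\sigma-g(\omega,x)$, middle $\nabla_x\omega+\sigma P^W(x)+\rho x$, bottom $x\rho-P^W(x,\omega)$. *)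

theory Defs
  imports "HOL-Analysis.Analysis"
begin

text \<open>Local (single chart, single scale) setting: the scale g is a smooth Riemannian
metric on an open set U of real^'n, given as a matrix-valued function; n = CARD('n).
Tractors in the scale g are triples (sigma, omega, rho).\<close>

type_synonym 'n tractor = "real \<times> (real^'n) \<times> real"

definition dimn :: "'n::finite itself \<Rightarrow> real" where
  "dimn _ = real CARD('n)"

definition pd :: "(real^'n::finite \<Rightarrow> real) \<Rightarrow> 'n \<Rightarrow> real^'n \<Rightarrow> real" where
  "pd f i p = frechet_derivative f (at p) (axis i 1)"

definition dd :: "(real^'n::finite \<Rightarrow> 'b::real_normed_vector) \<Rightarrow> real^'n \<Rightarrow> real^'n \<Rightarrow> 'b" where
  "dd f p x = frechet_derivative f (at p) x"

fun iter_pd :: "'n list \<Rightarrow> (real^'n::finite \<Rightarrow> real) \<Rightarrow> real^'n \<Rightarrow> real" where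
  "iter_pd [] f = f"
| "iter_pd (i # ds) f = pd (iter_pd ds f) i"

definition smooth_on :: "(real^'n::finite) set \<Rightarrow> (real^'n \<Rightarrow> real) \<Rightarrow> bool" where
  "smooth_on U f \<longleftrightarrow> (\<forall>ds. \<forall>p\<in>U. iter_pd ds f differentiable (at p))"

definition smooth_vf_on :: "(real^'n::finite) set \<Rightarrow> (real^'n \<Rightarrow> real^'n) \<Rightarrow> bool" where
  "smooth_vf_on U w \<longleftrightarrow> (\<forall>k. smooth_on U (\<lambda>q. w q $ k))"

definition riem_metric_on :: "(real^'n::finite) set \<Rightarrow> (real^'n \<Rightarrow> real^'n^'n) \<Rightarrow> bool" where
  "riem_metric_on U g \<longleftrightarrow>
     (\<forall>i j. smooth_on U (\<lambda>q. g q $ i $ j)) \<and>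
     (\<forall>p\<in>U. (\<forall>i j. g p $ i $ j = g p $ j $ i) \<and> (\<forall>x. x \<noteq> 0 \<longrightarrow> x \<bullet> (g p *v x) > 0))"

definition gin :: "(real^'n::finite \<Rightarrow> real^'n^'n) \<Rightarrow> real^'n \<Rightarrow> real^'n \<Rightarrow> real^'n \<Rightarrow> real" where
  "gin g p a b = a \<bullet> (g p *v b)"

definition ginv :: "(real^'n::finite \<Rightarrow> real^'n^'n) \<Rightarrow> real^'n \<Rightarrow> real^'n^'n" where
  "ginv g p = matrix_inv (g p)"

definition Gam :: "(real^'n::finite \<Rightarrow> real^'n^'n) \<Rightarrow> real^'n \<Rightarrow> 'n \<Rightarrow> 'n \<Rightarrow> 'n \<Rightarrow> real" where
  "Gam g p k i j = (1/2) * (\<Sum>l\<in>UNIV. ginv g p $ k $ l *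
      (pd (\<lambda>q. g q $ j $ l) i p + pd (\<lambda>q. g q $ i $ l) j p - pd (\<lambda>q. g q $ i $ j) l p))"

definition Ric :: "(real^'n::finite \<Rightarrow> real^'n^'n) \<Rightarrow> real^'n \<Rightarrow> 'n \<Rightarrow> 'n \<Rightarrow> real" where
  "Ric g p i j = (\<Sum>k\<in>UNIV. pd (\<lambda>q. Gam g q k i j) k p - pd (\<lambda>q. Gam g q k k i) j p
      + (\<Sum>l\<in>UNIV. Gam g p k k l * Gam g p l i j - Gam g p k j l * Gam g p l k i))"

definition Scal :: "(real^'n::finite \<Rightarrow> real^'n^'n) \<Rightarrow> real^'n \<Rightarrow> real" where
  "Scal g p = (\<Sum>i\<in>UNIV. \<Sum>j\<in>UNIV. ginv g p $ i $ j * Ric g p i j)"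

text \<open>J = tr P; solving P = (Ric - J g)/(n-2), J = tr P gives J = R/(2(n-1))\<close>
definition Jsc :: "(real^'n::finite \<Rightarrow> real^'n^'n) \<Rightarrow> real^'n \<Rightarrow> real" where
  "Jsc g p = Scal g p / (2 * (dimn TYPE('n) - 1))"

definition Sch :: "(real^'n::finite \<Rightarrow> real^'n^'n) \<Rightarrow> real^'n \<Rightarrow> 'n \<Rightarrow> 'n \<Rightarrow> real" where
  "Sch g p i j = (Ric g p i j - Jsc g p * g p $ i $ j) / (dimn TYPE('n) - 2)"

definition cov :: "(real^'n::finite \<Rightarrow> real^'n^'n) \<Rightarrow> real^'n \<Rightarrow> (real^'n \<Rightarrow> real^'n) \<Rightarrow> real^'n \<Rightarrow> real^'n" where
  "cov g p w x = dd w p x + (\<chi> k. \<Sum>i\<in>UNIV. \<Sum>j\<in>UNIV. Gam g p k i j * x $ i * w p $ j)"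

definition grad :: "(real^'n::finite \<Rightarrow> real^'n^'n) \<Rightarrow> (real^'n \<Rightarrow> real) \<Rightarrow> real^'n \<Rightarrow> real^'n" where
  "grad g f p = ginv g p *v (\<chi> i. pd f i p)"

definition hess :: "(real^'n::finite \<Rightarrow> real^'n^'n) \<Rightarrow> (real^'n \<Rightarrow> real) \<Rightarrow> real^'n \<Rightarrow> 'n \<Rightarrow> 'n \<Rightarrow> real" where
  "hess g f p i j = pd (\<lambda>q. pd f j q) i p - (\<Sum>k\<in>UNIV. Gam g p k i j * pd f k p)"

definition lap :: "(real^'n::finite \<Rightarrow> real^'n^'n) \<Rightarrow> (real^'n \<Rightarrow> real) \<Rightarrow> real^'n \<Rightarrow> real" where
  "lap g f p = (\<Sum>i\<in>UNIV. \<Sum>j\<in>UNIV. ginv g p $ i $ j * hess g f p i j)"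

definition Ric_phi :: "(real^'n::finite \<Rightarrow> real^'n^'n) \<Rightarrow> (real^'n \<Rightarrow> real) \<Rightarrow> real \<Rightarrow> real^'n \<Rightarrow> 'n \<Rightarrow> 'n \<Rightarrow> real" where
  "Ric_phi g v m p i j = Ric g p i j - m / v p * hess g v p i j"

definition R_phi :: "(real^'n::finite \<Rightarrow> real^'n^'n) \<Rightarrow> (real^'n \<Rightarrow> real) \<Rightarrow> real \<Rightarrow> real^'n \<Rightarrow> real" where
  "R_phi g v m p = Scal g p - 2 * m / v p * lap g v p
      - m * (m - 1) / (v p)^2 * gin g p (grad g v p) (grad g v p)"

definition JW :: "(real^'n::finite \<Rightarrow> real^'n^'n) \<Rightarrow> (real^'n \<Rightarrow> real) \<Rightarrow> real \<Rightarrow> real \<Rightarrow> real^'n \<Rightarrow> real" where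
  "JW g v m \<mu> p = (R_phi g v m p + m * \<mu> / (v p)^2) / (2 * (m + dimn TYPE('n) - 1))"

definition PW :: "(real^'n::finite \<Rightarrow> real^'n^'n) \<Rightarrow> (real^'n \<Rightarrow> real) \<Rightarrow> real \<Rightarrow> real \<Rightarrow> real^'n \<Rightarrow> 'n \<Rightarrow> 'n \<Rightarrow> real" where
  "PW g v m \<mu> p i j = (Ric_phi g v m p i j - JW g v m \<mu> p * g p $ i $ j) / (m + dimn TYPE('n) - 2)"

text \<open>Tractor connection in the scale g built from a symmetric 2-tensor Pt
  (Pt = Sch gives the normal tractor connection, Pt = PW gives the W-tractor connection).
  Pt(x) is the vector g-dual to Pt(x,.), and Pt(x,w) = sum x^i Pt_ij w^j.\<close>
definition tconn :: "(real^'n::finite \<Rightarrow> real^'n^'n) \<Rightarrow> (real^'n \<Rightarrow> 'n \<Rightarrow> 'n \<Rightarrow> real)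
     \<Rightarrow> real^'n \<Rightarrow> (real^'n \<Rightarrow> 'n tractor) \<Rightarrow> real^'n \<Rightarrow> 'n tractor" where
  "tconn g Pt p I x =
    (let \<sigma> = (\<lambda>q. fst (I q)); w = (\<lambda>q. fst (snd (I q))); \<rho> = (\<lambda>q. snd (snd (I q)));
         Pmat = (\<chi> i j. Pt p i j)
     in (dd \<sigma> p x - gin g p (w p) x,
         cov g p w x + \<sigma> p *\<^sub>R (ginv g p *v (Pmat *v x)) + \<rho> p *\<^sub>R x,
         dd \<rho> p x - x \<bullet> (Pmat *v w p)))"

definition tmetric :: "(real^'n::finite \<Rightarrow> real^'n^'n) \<Rightarrow> real^'n \<Rightarrow> 'n tractor \<Rightarrow> 'n tractor \<Rightarrow> real" where
  "tmetric g p I K = fst I * snd (snd K) + snd (snd I) * fst K + gin g p (fst (snd I)) (fst (snd K))"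

definition tcontr :: "(real^'n::finite \<Rightarrow> real^'n^'n) \<Rightarrow> real^'n \<Rightarrow> 'n tractor \<Rightarrow> 'n tractor \<Rightarrow> 'n tractor \<Rightarrow> 'n tractor" where
  "tcontr g p K I1 I2 = tmetric g p I1 K *\<^sub>R I2 - tmetric g p I2 K *\<^sub>R I1"

definition Xtr :: "real^'n::finite \<Rightarrow> 'n tractor" where
  "Xtr q = (0, 0, 1)"

text \<open>J = (1/n) D v, D v = (n v, n grad v, -(Lap v + J v))\<close>
definition Jtr :: "(real^'n::finite \<Rightarrow> real^'n^'n) \<Rightarrow> (real^'n \<Rightarrow> real) \<Rightarrow> real^'n \<Rightarrow> 'n tractor" where
  "Jtr g v q = (1 / dimn TYPE('n)) *\<^sub>R
     (dimn TYPE('n) * v q, dimn TYPE('n) *\<^sub>R grad g v q, - (lap g v q + Jsc g q * v q))"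

definition Btr :: "(real^'n::finite \<Rightarrow> real^'n^'n) \<Rightarrow> (real^'n \<Rightarrow> real) \<Rightarrow> real \<Rightarrow> real \<Rightarrow> real^'n \<Rightarrow> real^'n \<Rightarrow> 'n tractor" where
  "Btr g v m \<mu> p x = tconn g (Sch g) p (Jtr g v) x
     + ((\<mu> - (m - 1) * tmetric g p (Jtr g v p) (Jtr g v p)) / (2 * (m + dimn TYPE('n) - 1) * v p))
       *\<^sub>R tconn g (Sch g) p Xtr x"

end

(*
  In a scale, the W-tractor connection differs from the normal one only through the tensor
  that enters the middle and bottom slots: P^W instead of P.  Writing Ric = (n - 2) P + J g and
  eliminating J^W, one finds P^W = P - c T with c = m / (v (m + n - 2)) and
  T = Hess v + v P + (rho + kappa) g, where rho is the bottom slot of the tractor J and kappa the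
  coefficient of nabla_x X in B_x.  Since nabla_x X = (0, x, 0) and the middle slot of nabla_x J
  is nabla_x grad v + v P(x) + rho x, the vector T(x) is the middle slot of B_x with its index
  lowered, while the top slot of B_x vanishes.  For such a tractor B the contraction
  c I -| (B /\ X) is (0, -c sigma B_mid, c g(B_mid, omega)), which is exactly the change caused
  by replacing P with P - c T, provided T is symmetric.  The symmetry of T comes from the
  symmetry of the Hessian and of the Ricci tensor, both consequences of the symmetry of second
  partial derivatives (proved below via second differences).
*)

theory Submission
  imports Defs
begin

lemma pd_eq_derivative: "(f has_derivative f') (at p) \<Longrightarrow> pd f i p = f' (axis i 1)"
  unfolding pd_def using frechet_derivative_at by metis

lemma pd_cong_open:
  assumes "open S" "p \<in> S" "\<And>q. q \<in> S \<Longrightarrow> f q = h q"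
  shows "pd f i p = pd h i p"
proof -
  have "(f has_derivative f') (at p) \<longleftrightarrow> (h has_derivative f') (at p)" for f'
    using has_derivative_transform_within_open[of f f' p UNIV S h]
      has_derivative_transform_within_open[of h f' p UNIV S f] assms by auto
  then show ?thesis unfolding pd_def frechet_derivative_def by simp
qed

lemma differentiable_cong_open:
  assumes "open S" "p \<in> S" "\<And>q. q \<in> S \<Longrightarrow> f q = h q" "f differentiable (at p)"
  shows "h differentiable (at p)"
  using assms has_derivative_transform_within_open[of f _ p UNIV S h] unfolding differentiable_def
  by blast

lemma dd_eq_sum_pd:
  fixes f :: "real^'n::finite \<Rightarrow> real"
  assumes "f differentiable (at p)"
  shows "dd f p x = (\<Sum>i\<in>UNIV. x$i * pd f i p)"
proof -
  let ?L = "frechet_derivative f (at p)"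
  have "linear ?L" using assms frechet_derivative_works has_derivative_linear by blast
  moreover have "?L x = ?L (\<Sum>i\<in>UNIV. x$i *\<^sub>R axis i 1)"
    using basis_expansion[of x] by (simp add: scalar_mult_eq_scaleR)
  ultimately show ?thesis unfolding dd_def pd_def by (simp add: linear_sum linear_scale)
qed

lemma has_derivative_vec_componentwise:
  fixes w :: "real^'n::finite \<Rightarrow> real^'m::finite"
  assumes "\<And>k. ((\<lambda>q. w q $ k) has_derivative D k) (at p)"
  shows "(w has_derivative (\<lambda>h. \<chi> k. D k h)) (at p)"
proof (rule has_derivative_componentwise_within[THEN iffD2], rule ballI)
  fix b :: "real^'m" assume "b \<in> Basis"
  then obtain k where b: "b = axis k 1" unfolding Basis_vec_def by auto
  have "(\<lambda>x. w x \<bullet> b) = (\<lambda>x. w x $ k)" "(\<lambda>x. (\<chi> k. D k x) \<bullet> b) = D k"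
    by (simp_all add: b inner_axis)
  then show "((\<lambda>x. w x \<bullet> b) has_derivative (\<lambda>x. (\<chi> k. D k x) \<bullet> b)) (at p)"
    using assms by simp
qed

lemma dd_vec_eq_sum_pd:
  fixes w :: "real^'n::finite \<Rightarrow> real^'m::finite"
  assumes "\<And>k. (\<lambda>q. w q $ k) differentiable (at p)"
  shows "dd w p x = (\<chi> k. \<Sum>i\<in>UNIV. x$i * pd (\<lambda>q. w q $ k) i p)"
proof -
  have "(w has_derivative (\<lambda>h. \<chi> k. dd (\<lambda>q. w q $ k) p h)) (at p)"
    using assms unfolding dd_def
    by (intro has_derivative_vec_componentwise) (simp add: frechet_derivative_works)
  then have "(\<lambda>h. \<chi> k. dd (\<lambda>q. w q $ k) p h) = frechet_derivative w (at p)"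
    by (rule frechet_derivative_at)
  then have "dd w p x = (\<chi> k. dd (\<lambda>q. w q $ k) p x)"
    unfolding dd_def by (metis (no_types))
  then show ?thesis using dd_eq_sum_pd[OF assms] by simp
qed

lemma dd_const: "dd (\<lambda>q. c) p x = 0"
  unfolding dd_def by (simp flip: frechet_derivative_at[OF has_derivative_const])

lemma pd_const: "pd (\<lambda>q. c) i p = 0"
  using pd_eq_derivative[of "\<lambda>q. c" "\<lambda>h. 0"] by simp

lemma pd_mult:
  fixes f h :: "real^'n::finite \<Rightarrow> real"
  assumes "f differentiable (at p)" "h differentiable (at p)"
  shows "pd (\<lambda>q. f q * h q) i p = pd f i p * h p + f p * pd h i p"
proof -
  obtain F H where F: "(f has_derivative F) (at p)" and H: "(h has_derivative H) (at p)"
    using assms unfolding differentiable_def by blast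
  show ?thesis
    using pd_eq_derivative[OF has_derivative_mult[OF F H]] pd_eq_derivative[OF F]
      pd_eq_derivative[OF H] by simp
qed

lemma pd_cmult:
  fixes f :: "real^'n::finite \<Rightarrow> real"
  assumes "f differentiable (at p)"
  shows "pd (\<lambda>q. c * f q) i p = c * pd f i p"
  using pd_mult[OF differentiable_const assms, of c i] by (simp add: pd_const)

lemma pd_sum:
  fixes f :: "'a \<Rightarrow> real^'n::finite \<Rightarrow> real"
  assumes "finite S" "\<And>k. k \<in> S \<Longrightarrow> f k differentiable (at p)"
  shows "pd (\<lambda>q. \<Sum>k\<in>S. f k q) i p = (\<Sum>k\<in>S. pd (f k) i p)"
proof -
  have "((\<lambda>q. \<Sum>k\<in>S. f k q) has_derivative (\<lambda>y. \<Sum>k\<in>S. frechet_derivative (f k) (at p) y)) (at p)"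
    using assms by (intro has_derivative_sum) (simp add: frechet_derivative_works)
  then have "pd (\<lambda>q. \<Sum>k\<in>S. f k q) i p = (\<Sum>k\<in>S. frechet_derivative (f k) (at p) (axis i 1))"
    by (rule pd_eq_derivative)
  then show ?thesis by (simp add: pd_def)
qed

lemma differentiable_prod_fun:
  fixes f :: "'i \<Rightarrow> 'a::real_normed_vector \<Rightarrow> real"
  assumes "\<And>i. i \<in> I \<Longrightarrow> f i differentiable (at x)"
  shows "(\<lambda>x. \<Prod>i\<in>I. f i x) differentiable (at x)"
proof -
  have "((\<lambda>x. \<Prod>i\<in>I. f i x) has_derivative
      (\<lambda>y. \<Sum>i\<in>I. frechet_derivative (f i) (at x) y * (\<Prod>j\<in>I - {i}. f j x))) (at x)"
    using assms by (intro has_derivative_prod) (simp add: frechet_derivative_works)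
  then show ?thesis unfolding differentiable_def by blast
qed

section \<open>Symmetry of second partial derivatives\<close>

lemma second_difference_mvt:
  fixes f :: "real^'n::finite \<Rightarrow> real"
  assumes "0 < h"
    and "\<And>t. 0 \<le> t \<Longrightarrow> t \<le> h \<Longrightarrow>
      f differentiable (at (p + t *\<^sub>R a + h *\<^sub>R b)) \<and> f differentiable (at (p + t *\<^sub>R a))"
  shows "\<exists>t\<in>{0<..<h}. f (p + h *\<^sub>R a + h *\<^sub>R b) - f (p + h *\<^sub>R a) - f (p + h *\<^sub>R b) + f p
           = h * (dd f (p + t *\<^sub>R a + h *\<^sub>R b) a - dd f (p + t *\<^sub>R a) a)"
proof -
  define \<phi> where "\<phi> t = f (p + t *\<^sub>R a + h *\<^sub>R b) - f (p + t *\<^sub>R a)" for t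
  define F where "F t s = dd f (p + t *\<^sub>R a + h *\<^sub>R b) (s *\<^sub>R a) - dd f (p + t *\<^sub>R a) (s *\<^sub>R a)"
    for t s
  have "(\<phi> has_derivative F t) (at t within {0..h})" if "0 \<le> t" "t \<le> h" for t
  proof -
    have l1: "((\<lambda>t. p + t *\<^sub>R a + h *\<^sub>R b) has_derivative (\<lambda>s. s *\<^sub>R a)) (at t within {0..h})"
      and l2: "((\<lambda>t. p + t *\<^sub>R a) has_derivative (\<lambda>s. s *\<^sub>R a)) (at t within {0..h})"
      by (auto intro!: derivative_eq_intros)
    have f1: "(f has_derivative frechet_derivative f (at (p + t *\<^sub>R a + h *\<^sub>R b)))
        (at (p + t *\<^sub>R a + h *\<^sub>R b))"
      and f2: "(f has_derivative frechet_derivative f (at (p + t *\<^sub>R a))) (at (p + t *\<^sub>R a))"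
      using assms(2)[OF that] frechet_derivative_works by blast+
    show ?thesis
      unfolding \<phi>_def F_def dd_def
      using has_derivative_diff[OF has_derivative_compose[OF l1 f1] has_derivative_compose[OF l2 f2]] .
  qed
  then obtain t where t: "t \<in> {0<..<h}" "\<phi> h - \<phi> 0 = F t h"
    using mvt_simple[of 0 h \<phi> F] assms(1) by auto
  have "linear (frechet_derivative f (at q))" if "f differentiable (at q)" for q
    using that frechet_derivative_works has_derivative_linear by blast
  then have "F t h = h * (dd f (p + t *\<^sub>R a + h *\<^sub>R b) a - dd f (p + t *\<^sub>R a) a)"
    using assms(2)[of t] t(1) unfolding F_def dd_def by (simp add: linear_scale right_diff_distrib)
  moreover have "\<phi> h - \<phi> 0 = f (p + h *\<^sub>R a + h *\<^sub>R b) - f (p + h *\<^sub>R a) - f (p + h *\<^sub>R b) + f p"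
    unfolding \<phi>_def by simp
  ultimately show ?thesis using t by (intro bexI[of _ t]) simp_all
qed

lemma second_difference_quotient_estimate:
  fixes f :: "real^'n::finite \<Rightarrow> real"
  assumes "ball p r \<subseteq> U" "\<forall>q\<in>U. f differentiable (at q)" "linear D" "e > 0"
    and d: "\<forall>y. norm (y - p) < d \<longrightarrow> norm (pd f i y - pd f i p - D (y - p)) \<le> e/3 * norm (y - p)"
    and h: "0 < h" "h < min d r / 2"
  shows "\<bar>(f (p + h *\<^sub>R axis i 1 + h *\<^sub>R axis j 1) - f (p + h *\<^sub>R axis i 1)
            - f (p + h *\<^sub>R axis j 1) + f p) / h\<^sup>2 - D (axis j 1)\<bar> < e"
proof -
  define a :: "real^'n" where "a = axis i 1"
  define b :: "real^'n" where "b = axis j 1"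
  define q1 where "q1 t = p + t *\<^sub>R a + h *\<^sub>R b" for t
  define q2 where "q2 t = p + t *\<^sub>R a" for t
  have near: "norm (q1 t - p) \<le> t + h" "norm (q2 t - p) = t" if "0 \<le> t" for t
  proof -
    have "q1 t - p = t *\<^sub>R a + h *\<^sub>R b" by (simp add: q1_def)
    then have "norm (q1 t - p) \<le> norm (t *\<^sub>R a) + norm (h *\<^sub>R b)"
      by (metis norm_triangle_ineq)
    then show "norm (q1 t - p) \<le> t + h" using that h by (simp add: a_def b_def)
    show "norm (q2 t - p) = t" using that by (simp add: q2_def a_def)
  qed
  have "f differentiable (at (p + t *\<^sub>R a + h *\<^sub>R b)) \<and> f differentiable (at (p + t *\<^sub>R a))"
    if "0 \<le> t" "t \<le> h" for t
  proof -
    have "norm (q1 t - p) < r" "norm (q2 t - p) < r" using near[OF that(1)] that h by auto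
    then have "q1 t \<in> U" "q2 t \<in> U" using assms(1) by (auto simp: dist_norm norm_minus_commute)
    then show ?thesis using assms(2) unfolding q1_def q2_def by blast
  qed
  from second_difference_mvt[of h f p a b, OF h(1) this]
  obtain t where t: "0 < t" "t < h" and
    \<Delta>: "f (p + h *\<^sub>R a + h *\<^sub>R b) - f (p + h *\<^sub>R a) - f (p + h *\<^sub>R b) + f p
         = h * (dd f (q1 t) a - dd f (q2 t) a)"
    unfolding q1_def q2_def by auto
  have dd_a: "dd f q a = pd f i q" for q unfolding dd_def pd_def a_def ..
  have "D (q1 t - p) - D (q2 t - p) = h * D b"
    using linear_diff[OF assms(3), of "q1 t - p" "q2 t - p"] linear_scale[OF assms(3)]
    by (simp add: q1_def q2_def)
  then have "pd f i (q1 t) - pd f i (q2 t) - h * D b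
      = (pd f i (q1 t) - pd f i p - D (q1 t - p)) - (pd f i (q2 t) - pd f i p - D (q2 t - p))"
    by simp
  then have "\<bar>pd f i (q1 t) - pd f i (q2 t) - h * D b\<bar>
      \<le> \<bar>pd f i (q1 t) - pd f i p - D (q1 t - p)\<bar> + \<bar>pd f i (q2 t) - pd f i p - D (q2 t - p)\<bar>"
    by (metis abs_triangle_ineq4)
  also have "\<dots> \<le> e/3 * norm (q1 t - p) + e/3 * norm (q2 t - p)"
    using d[rule_format, of "q1 t"] d[rule_format, of "q2 t"] near[of t] t h
    by (intro add_mono) auto
  also have "\<dots> \<le> e/3 * (t + h) + e/3 * t"
    using near[of t] t \<open>e > 0\<close> by (intro add_mono mult_left_mono) auto
  also have "\<dots> < e * h" using t \<open>e > 0\<close> by (simp add: field_simps)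
  finally have "\<bar>pd f i (q1 t) - pd f i (q2 t) - h * D b\<bar> < e * h" .
  moreover have "(f (p + h *\<^sub>R a + h *\<^sub>R b) - f (p + h *\<^sub>R a) - f (p + h *\<^sub>R b) + f p) / h\<^sup>2 - D b
      = (pd f i (q1 t) - pd f i (q2 t) - h * D b) / h"
    unfolding \<Delta> dd_a using h(1) by (simp add: power2_eq_square diff_divide_distrib)
  ultimately show ?thesis using h(1) unfolding a_def b_def by (simp add: abs_divide pos_divide_less_eq)
qed

lemma second_difference_quotient_tendsto:
  fixes f :: "real^'n::finite \<Rightarrow> real"
  assumes "open U" "p \<in> U" "\<forall>q\<in>U. f differentiable (at q)" "pd f i differentiable (at p)"
  shows "((\<lambda>h. (f (p + h *\<^sub>R axis i 1 + h *\<^sub>R axis j 1) - f (p + h *\<^sub>R axis i 1)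
                - f (p + h *\<^sub>R axis j 1) + f p) / h\<^sup>2) \<longlongrightarrow> pd (pd f i) j p) (at_right 0)"
proof (rule tendstoI)
  fix e :: real assume "e > 0"
  obtain r where r: "r > 0" "ball p r \<subseteq> U" using assms(1,2) open_contains_ball by blast
  define D where "D = frechet_derivative (pd f i) (at p)"
  have D: "(pd f i has_derivative D) (at p)" using assms(4) D_def frechet_derivative_works by blast
  then have "linear D" using has_derivative_linear by blast
  obtain d where d: "d > 0"
    "\<forall>y. norm (y - p) < d \<longrightarrow> norm (pd f i y - pd f i p - D (y - p)) \<le> e/3 * norm (y - p)"
    using D \<open>e > 0\<close> unfolding has_derivative_at_alt by (metis zero_less_divide_iff zero_less_numeral)
  have "pd (pd f i) j p = D (axis j 1)" unfolding pd_def D_def ..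
  then show "\<forall>\<^sub>F h in at_right 0. dist ((f (p + h *\<^sub>R axis i 1 + h *\<^sub>R axis j 1)
      - f (p + h *\<^sub>R axis i 1) - f (p + h *\<^sub>R axis j 1) + f p) / h\<^sup>2) (pd (pd f i) j p) < e"
    unfolding eventually_at_right_field dist_real_def
    using second_difference_quotient_estimate[OF r(2) assms(3) \<open>linear D\<close> \<open>e > 0\<close> d(2)] d(1) r(1)
    by (intro exI[of _ "min d r / 2"]) auto
qed

lemma pd_pd_commute:
  fixes f :: "real^'n::finite \<Rightarrow> real"
  assumes "open U" "p \<in> U" "\<forall>q\<in>U. f differentiable (at q)"
    and "pd f i differentiable (at p)" "pd f j differentiable (at p)"
  shows "pd (pd f i) j p = pd (pd f j) i p"
proof (rule tendsto_unique[OF trivial_limit_at_right_real])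
  show "((\<lambda>h. (f (p + h *\<^sub>R axis i 1 + h *\<^sub>R axis j 1) - f (p + h *\<^sub>R axis i 1)
                - f (p + h *\<^sub>R axis j 1) + f p) / h\<^sup>2) \<longlongrightarrow> pd (pd f i) j p) (at_right 0)"
    using second_difference_quotient_tendsto[OF assms(1-4)] .
  show "((\<lambda>h. (f (p + h *\<^sub>R axis i 1 + h *\<^sub>R axis j 1) - f (p + h *\<^sub>R axis i 1)
                - f (p + h *\<^sub>R axis j 1) + f p) / h\<^sup>2) \<longlongrightarrow> pd (pd f j) i p) (at_right 0)"
  proof -
    have swap: "f (p + h *\<^sub>R axis j 1 + h *\<^sub>R axis i 1) - f (p + h *\<^sub>R axis j 1)
                - f (p + h *\<^sub>R axis i 1) + f p
              = f (p + h *\<^sub>R axis i 1 + h *\<^sub>R axis j 1) - f (p + h *\<^sub>R axis i 1)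
                - f (p + h *\<^sub>R axis j 1) + f p" for h
    proof -
      have args: "p + h *\<^sub>R axis j 1 + h *\<^sub>R axis i 1 = p + h *\<^sub>R axis i 1 + h *\<^sub>R axis j 1"
        by (simp add: add_ac)
      show ?thesis unfolding args by linarith
    qed
    show ?thesis
      using second_difference_quotient_tendsto[OF assms(1-3,5), of i] by (simp only: swap)
  qed
qed

lemma matrix_inv_mult:
  fixes A :: "real^'n::finite^'n"
  assumes "invertible A"
  shows "A ** matrix_inv A = mat 1" "matrix_inv A ** A = mat 1"
proof -
  have "\<exists>A'. A ** A' = mat 1 \<and> A' ** A = mat 1" using assms unfolding invertible_def .
  then have "A ** matrix_inv A = mat 1 \<and> matrix_inv A ** A = mat 1"
    unfolding matrix_inv_def by (rule someI_ex)
  then show "A ** matrix_inv A = mat 1" "matrix_inv A ** A = mat 1" by auto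
qed

lemma matrix_inv_entry_cramer:
  fixes A :: "real^'n::finite^'n"
  assumes "invertible A"
  shows "matrix_inv A $ k $ l = det (\<chi> i j. if j = k then axis l 1 $ i else A $ i $ j) / det A"
proof -
  have "A *v (matrix_inv A *v axis l 1) = axis l 1"
    by (simp add: matrix_vector_mul_assoc matrix_inv_mult(1)[OF assms])
  then have "matrix_inv A *v axis l 1 = (\<chi> k. det (\<chi> i j. if j = k then axis l 1 $ i else A $ i $ j) / det A)"
    using cramer assms invertible_det_nz by blast
  then show ?thesis by (simp add: matrix_vector_mult_basis column_def fun_eq_iff)
qed

lemma matrix_mul_uminus_right:
  fixes A B :: "real^'n::finite^'n"
  shows "A ** (- B) = - (A ** B)"
  by (simp add: matrix_matrix_mult_def vec_eq_iff sum_negf)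

lemma differentiable_det:
  fixes M :: "'a::real_normed_vector \<Rightarrow> real^'n::finite^'n"
  assumes "\<And>i j. (\<lambda>q. M q $ i $ j) differentiable (at p)"
  shows "(\<lambda>q. det (M q)) differentiable (at p)"
  unfolding det_def
  by (intro differentiable_sum ballI differentiable_mult differentiable_const differentiable_prod_fun assms)
    simp

lemma differentiable_matrix_inv_entry:
  fixes G :: "'a::real_normed_vector \<Rightarrow> real^'n::finite^'n"
  assumes "open U" "p \<in> U" "\<forall>q\<in>U. invertible (G q)"
    and "\<And>i j. (\<lambda>q. G q $ i $ j) differentiable (at p)"
  shows "(\<lambda>q. matrix_inv (G q) $ k $ l) differentiable (at p)"
proof (rule differentiable_cong_open[OF assms(1,2)])
  show "(\<lambda>q. det (\<chi> i j. if j = k then axis l 1 $ i else G q $ i $ j) / det (G q)) differentiable (at p)"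
  proof (intro differentiable_divide differentiable_det)
    show "(\<lambda>q. (\<chi> i j. if j = k then axis l 1 $ i else G q $ i $ j) $ i $ j) differentiable (at p)" for i j
      by (cases "j = k") (simp_all add: assms(4))
    show "det (G p) \<noteq> 0" using assms(2,3) invertible_det_nz by blast
  qed (rule assms(4))
  show "det (\<chi> i j. if j = k then axis l 1 $ i else G q $ i $ j) / det (G q) = matrix_inv (G q) $ k $ l"
    if "q \<in> U" for q
    using that assms(3) by (simp add: matrix_inv_entry_cramer)
qed

lemma pd_matrix_inv:
  fixes G :: "real^'m::finite \<Rightarrow> real^'n::finite^'n"
  assumes U: "open U" "p \<in> U" and inv: "\<forall>q\<in>U. invertible (G q)"
    and diff: "\<And>i j. (\<lambda>q. G q $ i $ j) differentiable (at p)"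
  shows "(\<chi> a b. pd (\<lambda>q. matrix_inv (G q) $ a $ b) i p)
     = - (matrix_inv (G p) ** (\<chi> a b. pd (\<lambda>q. G q $ a $ b) i p) ** matrix_inv (G p))"
proof -
  define H where "H q = matrix_inv (G q)" for q
  define dG where "dG = (\<chi> a b. pd (\<lambda>q. G q $ a $ b) i p)"
  define dH where "dH = (\<chi> a b. pd (\<lambda>q. H q $ a $ b) i p)"
  have Hdiff: "(\<lambda>q. H q $ a $ b) differentiable (at p)" for a b
    unfolding H_def using differentiable_matrix_inv_entry[OF U inv diff] .
  have "G p ** dH = - (dG ** H p)"
  proof -
    have "(G p ** dH) $ a $ b + (dG ** H p) $ a $ b = 0" for a b
    proof -
      have "pd (\<lambda>q. \<Sum>c\<in>UNIV. G q $ a $ c * H q $ c $ b) i p = pd (\<lambda>q. mat 1 $ a $ b) i p"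
      proof (rule pd_cong_open[OF U])
        fix q assume "q \<in> U"
        then have "(G q ** H q) $ a $ b = mat 1 $ a $ b" using inv matrix_inv_mult(1) H_def by metis
        then show "(\<Sum>c\<in>UNIV. G q $ a $ c * H q $ c $ b) = mat 1 $ a $ b"
          by (simp add: matrix_matrix_mult_def)
      qed
      also have "\<dots> = 0" by (rule pd_const)
      finally show ?thesis
        by (simp add: pd_sum pd_mult diff Hdiff matrix_matrix_mult_def dG_def dH_def sum.distrib add.commute)
    qed
    then show ?thesis by (simp add: vec_eq_iff eq_neg_iff_add_eq_0)
  qed
  then have "dH = - (H p ** dG ** H p)"
    by (metis H_def U(2) inv matrix_inv_mult(2) matrix_mul_assoc matrix_mul_lid matrix_mul_uminus_right)
  then show ?thesis unfolding dH_def dG_def H_def .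
qed

lemma sum_entrywise_mult_eq_trace:
  fixes A B :: "real^'n^'n"
  shows "(\<Sum>k\<in>UNIV. \<Sum>l\<in>UNIV. A $ k $ l * B $ k $ l) = trace (A ** transpose B)"
  unfolding trace_def matrix_matrix_mult_def transpose_def by simp

lemma trace_uminus_mult:
  fixes A B :: "real^'n^'n"
  shows "trace ((- A) ** B) = - trace (A ** B)"
  unfolding trace_def matrix_matrix_mult_def by (simp add: sum_negf)

lemma dot_symmetric_matrix:
  fixes A :: "real^'n::finite^'n"
  assumes "transpose A = A"
  shows "x \<bullet> (A *v y) = (A *v x) \<bullet> y"
  by (metis assms dot_lmul_matrix transpose_matrix_vector)

section \<open>The metric, its inverse and its curvature in a chart\<close>

lemma smooth_on_differentiable: "smooth_on U f \<Longrightarrow> q \<in> U \<Longrightarrow> f differentiable (at q)"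
  unfolding smooth_on_def by (metis iter_pd.simps(1))

lemma smooth_on_pd_differentiable: "smooth_on U f \<Longrightarrow> q \<in> U \<Longrightarrow> pd f i differentiable (at q)"
  unfolding smooth_on_def by (metis iter_pd.simps)

lemma smooth_on_pd_pd_commute:
  assumes "smooth_on U f" "open U" "p \<in> U"
  shows "pd (pd f i) j p = pd (pd f j) i p"
  using assms by (intro pd_pd_commute) (auto intro: smooth_on_differentiable smooth_on_pd_differentiable)

locale riem_chart =
  fixes U :: "(real^'n::finite) set" and g :: "real^'n \<Rightarrow> real^'n^'n" and p :: "real^'n"
  assumes open_U: "open U" and p_in_U: "p \<in> U" and metric: "riem_metric_on U g"
begin

lemma smooth_metric_entry: "smooth_on U (\<lambda>q. g q $ i $ j)"
  using metric unfolding riem_metric_on_def by blast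

lemma metric_sym: "q \<in> U \<Longrightarrow> g q $ i $ j = g q $ j $ i"
  using metric unfolding riem_metric_on_def by blast

lemma transpose_metric: "q \<in> U \<Longrightarrow> transpose (g q) = g q"
  by (simp add: transpose_def vec_eq_iff metric_sym)

lemma differentiable_metric_entry: "q \<in> U \<Longrightarrow> (\<lambda>q. g q $ i $ j) differentiable (at q)"
  using smooth_on_differentiable[OF smooth_metric_entry] .

lemma differentiable_pd_metric_entry: "q \<in> U \<Longrightarrow> pd (\<lambda>q. g q $ i $ j) k differentiable (at q)"
  using smooth_on_pd_differentiable[OF smooth_metric_entry] .

lemma pd_metric_sym: "q \<in> U \<Longrightarrow> pd (\<lambda>q. g q $ i $ j) l q = pd (\<lambda>q. g q $ j $ i) l q"
  by (rule pd_cong_open[OF open_U]) (simp_all add: metric_sym)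

lemma invertible_metric:
  assumes "q \<in> U"
  shows "invertible (g q)"
proof -
  have "inj ((*v) (g q))"
  proof (rule injI)
    fix x y assume "g q *v x = g q *v y"
    then have "(x - y) \<bullet> (g q *v (x - y)) = 0" by (simp add: matrix_vector_mult_diff_distrib)
    moreover have "(x - y) \<bullet> (g q *v (x - y)) > 0" if "x \<noteq> y"
      using metric assms that unfolding riem_metric_on_def by simp
    ultimately show "x = y" by fastforce
  qed
  then show ?thesis using matrix_left_invertible_injective invertible_left_inverse by blast
qed

lemma metric_mult_ginv: "q \<in> U \<Longrightarrow> g q ** ginv g q = mat 1"
  unfolding ginv_def using matrix_inv_mult(1)[OF invertible_metric] .

lemma ginv_mult_metric: "q \<in> U \<Longrightarrow> ginv g q ** g q = mat 1"
  unfolding ginv_def using matrix_inv_mult(2)[OF invertible_metric] .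

lemma transpose_ginv:
  assumes "q \<in> U"
  shows "transpose (ginv g q) = ginv g q"
proof -
  have "transpose (ginv g q) = transpose (ginv g q) ** (g q ** ginv g q)"
    by (simp add: metric_mult_ginv[OF assms])
  also have "\<dots> = transpose (g q ** ginv g q) ** ginv g q"
    by (simp add: matrix_mul_assoc matrix_transpose_mul transpose_metric[OF assms])
  finally show ?thesis by (simp add: metric_mult_ginv[OF assms])
qed

lemma ginv_sym: "q \<in> U \<Longrightarrow> ginv g q $ i $ j = ginv g q $ j $ i"
  using transpose_ginv[of q] by (metis transpose_def vec_lambda_beta)

lemma differentiable_ginv_entry: "(\<lambda>q. ginv g q $ a $ b) differentiable (at p)"
  unfolding ginv_def
  using differentiable_matrix_inv_entry[OF open_U p_in_U] invertible_metric
    differentiable_metric_entry[OF p_in_U] by blast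

definition dmetric :: "'n \<Rightarrow> real^'n^'n" where
  "dmetric i = (\<chi> a b. pd (\<lambda>q. g q $ a $ b) i p)"

definition dginv :: "'n \<Rightarrow> real^'n^'n" where
  "dginv i = (\<chi> a b. pd (\<lambda>q. ginv g q $ a $ b) i p)"

lemma transpose_dmetric: "transpose (dmetric i) = dmetric i"
  using pd_metric_sym[OF p_in_U] by (simp add: transpose_def vec_eq_iff dmetric_def)

lemma dginv_eq: "dginv i = - (ginv g p ** dmetric i ** ginv g p)"
  unfolding dginv_def dmetric_def ginv_def
  using pd_matrix_inv[OF open_U p_in_U] invertible_metric differentiable_metric_entry[OF p_in_U]
  by blast

text \<open>Christoffel symbols of the first kind: \<open>Gam_low i $ m $ j\<close> is \<open>\<Gamma>\<^sub>m\<^sub>i\<^sub>j\<close>.\<close>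

definition Gam_low :: "'n \<Rightarrow> real^'n^'n" where
  "Gam_low i = (\<chi> m j. (pd (\<lambda>q. g q $ j $ m) i p + pd (\<lambda>q. g q $ i $ m) j p
                         - pd (\<lambda>q. g q $ i $ j) m p) / 2)"

lemma Gam_eq_ginv_Gam_low: "Gam g p k i j = (ginv g p ** Gam_low i) $ k $ j"
  by (simp add: Gam_def Gam_low_def matrix_matrix_mult_def sum_divide_distrib sum_distrib_left)

lemma Gam_low_add_transpose: "Gam_low i + transpose (Gam_low i) = dmetric i"
  using pd_metric_sym[OF p_in_U]
  by (simp add: vec_eq_iff transpose_def Gam_low_def dmetric_def field_simps)

lemma Gam_sym: "q \<in> U \<Longrightarrow> Gam g q k i j = Gam g q k j i"
  unfolding Gam_def by (simp add: pd_metric_sym[of q j i] algebra_simps)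

lemma differentiable_Gam: "(\<lambda>q. Gam g q k i j) differentiable (at p)"
  unfolding Gam_def
  by (intro differentiable_mult differentiable_const differentiable_sum ballI differentiable_add
      differentiable_diff differentiable_ginv_entry differentiable_pd_metric_entry[OF p_in_U])
    simp_all

lemma metric_mult_dginv: "g p ** dginv i = - (dmetric i ** ginv g p)"
  by (simp add: dginv_eq matrix_mul_uminus_right matrix_mul_assoc metric_mult_ginv[OF p_in_U])

lemma grad_component: "grad g v q $ k = (\<Sum>j\<in>UNIV. ginv g q $ k $ j * pd v j q)"
  by (simp add: grad_def matrix_vector_mult_def)

lemma differentiable_grad_component:
  assumes "smooth_on U v"
  shows "(\<lambda>q. grad g v q $ k) differentiable (at p)"
  unfolding grad_component
  by (intro differentiable_sum ballI differentiable_mult differentiable_ginv_entry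
      smooth_on_pd_differentiable[OF assms p_in_U]) simp

lemma pd_grad_component:
  assumes "smooth_on U v"
  shows "pd (\<lambda>q. grad g v q $ k) i p
    = (dginv i *v (\<chi> j. pd v j p) + ginv g p *v (\<chi> j. pd (pd v j) i p)) $ k"
proof -
  have "pd (\<lambda>q. grad g v q $ k) i p = (\<Sum>j\<in>UNIV. pd (\<lambda>q. ginv g q $ k $ j * pd v j q) i p)"
    unfolding grad_component
    by (rule pd_sum) (auto intro!: differentiable_mult differentiable_ginv_entry
        smooth_on_pd_differentiable[OF assms p_in_U])
  also have "\<dots> = (\<Sum>j\<in>UNIV. pd (\<lambda>q. ginv g q $ k $ j) i p * pd v j p
                            + ginv g p $ k $ j * pd (pd v j) i p)"
    using pd_mult[OF differentiable_ginv_entry smooth_on_pd_differentiable[OF assms p_in_U]]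
    by simp
  finally show ?thesis by (simp add: matrix_vector_mult_def dginv_def sum.distrib)
qed

lemma cov_grad:
  assumes "smooth_on U v"
  shows "cov g p (grad g v) x = (\<Sum>i\<in>UNIV. x$i *\<^sub>R
    (dginv i *v (\<chi> j. pd v j p) + ginv g p *v (\<chi> j. pd (pd v j) i p)
     + (ginv g p ** Gam_low i) *v grad g v p))"
proof -
  have "(\<Sum>i\<in>UNIV. \<Sum>j\<in>UNIV. Gam g p k i j * x $ i * grad g v p $ j)
      = (\<Sum>i\<in>UNIV. x$i * ((ginv g p ** Gam_low i) *v grad g v p) $ k)" for k
    by (simp add: Gam_eq_ginv_Gam_low matrix_vector_mult_def sum_distrib_left mult_ac)
  then show ?thesis
    unfolding cov_def dd_vec_eq_sum_pd[OF differentiable_grad_component[OF assms]]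
    by (simp add: vec_eq_iff pd_grad_component[OF assms] sum_component algebra_simps sum.distrib)
qed

lemma hess_eq_Gam_low:
  "hess g v p i l = pd (pd v l) i p - (transpose (Gam_low i) *v grad g v p) $ l"
proof -
  have "(\<Sum>k\<in>UNIV. Gam g p k i l * pd v k p)
      = (transpose (ginv g p ** Gam_low i) *v (\<chi> j. pd v j p)) $ l"
    by (simp add: Gam_eq_ginv_Gam_low transpose_def matrix_vector_mult_def mult_ac)
  also have "\<dots> = (transpose (Gam_low i) *v grad g v p) $ l"
    by (simp add: matrix_transpose_mul transpose_ginv[OF p_in_U] matrix_vector_mul_assoc grad_def)
  finally show ?thesis unfolding hess_def by simp
qed

lemma metric_cov_grad:
  assumes "smooth_on U v"
  shows "g p *v cov g p (grad g v) x = (\<chi> l. \<Sum>i\<in>UNIV. x$i * hess g v p i l)"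
proof -
  have "g p *v (dginv i *v (\<chi> j. pd v j p) + ginv g p *v (\<chi> j. pd (pd v j) i p)
                + (ginv g p ** Gam_low i) *v grad g v p)
      = (\<chi> l. hess g v p i l)" for i
  proof -
    have "g p *v (dginv i *v (\<chi> j. pd v j p)) = - (dmetric i *v grad g v p)"
      by (simp add: matrix_vector_mul_assoc metric_mult_dginv grad_def)
        (simp add: vec_eq_iff matrix_vector_mult_def matrix_matrix_mult_def sum_negf)
    moreover have "dmetric i *v grad g v p
        = Gam_low i *v grad g v p + transpose (Gam_low i) *v grad g v p"
      by (simp flip: Gam_low_add_transpose add: matrix_vector_mult_add_rdistrib)
    ultimately show ?thesis
      by (simp add: matrix_vector_right_distrib matrix_vector_mul_assoc matrix_mul_assoc
          metric_mult_ginv[OF p_in_U] vec_eq_iff hess_eq_Gam_low)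
  qed
  then show ?thesis
    unfolding cov_grad[OF assms] by (simp add: vec.sum matrix_vector_mult_scaleR vec_eq_iff sum_component)
qed

lemma hess_sym:
  assumes "smooth_on U v"
  shows "hess g v p i j = hess g v p j i"
  unfolding hess_def using smooth_on_pd_pd_commute[OF assms open_U p_in_U, of i j] Gam_sym[OF p_in_U]
  by simp

lemma trace_Gam:
  assumes "q \<in> U"
  shows "(\<Sum>k\<in>UNIV. Gam g q k k i)
    = 1/2 * (\<Sum>k\<in>UNIV. \<Sum>l\<in>UNIV. ginv g q $ k $ l * pd (\<lambda>q. g q $ k $ l) i q)"
proof -
  let ?H = "ginv g q"
  have "(\<Sum>k\<in>UNIV. \<Sum>l\<in>UNIV. ?H $ k $ l * pd (\<lambda>q. g q $ i $ l) k q)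
      = (\<Sum>l\<in>UNIV. \<Sum>k\<in>UNIV. ?H $ l $ k * pd (\<lambda>q. g q $ l $ i) k q)"
    using ginv_sym[OF assms] pd_metric_sym[OF assms] by (subst sum.swap) simp
  moreover have "(\<Sum>k\<in>UNIV. Gam g q k k i) = 1/2 * (\<Sum>k\<in>UNIV. \<Sum>l\<in>UNIV. ?H $ k $ l *
      (pd (\<lambda>q. g q $ i $ l) k q + pd (\<lambda>q. g q $ k $ l) i q - pd (\<lambda>q. g q $ k $ i) l q))"
    unfolding Gam_def by (simp add: sum_distrib_left)
  ultimately show ?thesis
    by (simp add: algebra_simps sum.distrib sum_subtractf)
qed

lemma pd_trace_Gam:
  "(\<Sum>k\<in>UNIV. pd (\<lambda>q. Gam g q k k i) j p)
    = 1/2 * ((\<Sum>k\<in>UNIV. \<Sum>l\<in>UNIV. dginv j $ k $ l * dmetric i $ k $ l)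
             + (\<Sum>k\<in>UNIV. \<Sum>l\<in>UNIV. ginv g p $ k $ l * pd (pd (\<lambda>q. g q $ k $ l) i) j p))"
proof -
  define T where "T q = (\<Sum>k\<in>UNIV. \<Sum>l\<in>UNIV. ginv g q $ k $ l * pd (\<lambda>q. g q $ k $ l) i q)" for q
  have diff_summand: "(\<lambda>q. ginv g q $ k $ l * pd (\<lambda>q. g q $ k $ l) i q) differentiable (at p)" for k l
    by (intro differentiable_mult differentiable_ginv_entry differentiable_pd_metric_entry[OF p_in_U])
  have "(\<Sum>k\<in>UNIV. pd (\<lambda>q. Gam g q k k i) j p) = pd (\<lambda>q. \<Sum>k\<in>UNIV. Gam g q k k i) j p"
    by (rule pd_sum[symmetric]) (simp_all add: differentiable_Gam)
  also have "\<dots> = pd (\<lambda>q. 1/2 * T q) j p"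
    by (rule pd_cong_open[OF open_U p_in_U]) (simp add: trace_Gam T_def)
  also have "\<dots> = 1/2 * pd T j p"
    unfolding T_def by (intro pd_cmult differentiable_sum ballI diff_summand) simp_all
  also have "pd T j p = (\<Sum>k\<in>UNIV. \<Sum>l\<in>UNIV. pd (\<lambda>q. ginv g q $ k $ l * pd (\<lambda>q. g q $ k $ l) i q) j p)"
    unfolding T_def by (simp add: pd_sum diff_summand)
  also have "\<dots> = (\<Sum>k\<in>UNIV. \<Sum>l\<in>UNIV. dginv j $ k $ l * dmetric i $ k $ l
                   + ginv g p $ k $ l * pd (pd (\<lambda>q. g q $ k $ l) i) j p)"
    using pd_mult[OF differentiable_ginv_entry differentiable_pd_metric_entry[OF p_in_U]]
    by (simp add: dginv_def dmetric_def)
  finally show ?thesis by (simp add: sum.distrib)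
qed

lemma trace_dginv_dmetric_sym:
  "(\<Sum>k\<in>UNIV. \<Sum>l\<in>UNIV. dginv j $ k $ l * dmetric i $ k $ l)
 = (\<Sum>k\<in>UNIV. \<Sum>l\<in>UNIV. dginv i $ k $ l * dmetric j $ k $ l)"
proof -
  have "(\<Sum>k\<in>UNIV. \<Sum>l\<in>UNIV. dginv j $ k $ l * dmetric i $ k $ l)
      = - trace (ginv g p ** dmetric j ** ginv g p ** dmetric i)" for i j
    by (simp only: sum_entrywise_mult_eq_trace transpose_dmetric dginv_eq trace_uminus_mult)
  then show ?thesis
    using trace_mul_sym[of "ginv g p ** dmetric j" "ginv g p ** dmetric i"]
    by (simp add: matrix_mul_assoc)
qed

lemma Ric_sym: "Ric g p i j = Ric g p j i"
proof -
  have "pd (\<lambda>q. Gam g q k i j) k p = pd (\<lambda>q. Gam g q k j i) k p" for k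
    by (rule pd_cong_open[OF open_U p_in_U]) (simp add: Gam_sym)
  moreover have "(\<Sum>k\<in>UNIV. pd (\<lambda>q. Gam g q k k i) j p) = (\<Sum>k\<in>UNIV. pd (\<lambda>q. Gam g q k k j) i p)"
    unfolding pd_trace_Gam
    using trace_dginv_dmetric_sym smooth_on_pd_pd_commute[OF smooth_metric_entry open_U p_in_U]
    by simp
  moreover have "(\<Sum>k\<in>UNIV. \<Sum>l\<in>UNIV. Gam g p k j l * Gam g p l k i)
               = (\<Sum>k\<in>UNIV. \<Sum>l\<in>UNIV. Gam g p k i l * Gam g p l k j)"
    by (subst sum.swap) (simp add: Gam_sym[OF p_in_U, of _ j] Gam_sym[OF p_in_U, of _ _ i] mult.commute)
  ultimately show ?thesis
    unfolding Ric_def by (simp add: sum.distrib sum_subtractf Gam_sym[OF p_in_U, of _ i j])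
qed

end

section \<open>Tractor connections\<close>

lemma tconn_components:
  "fst (tconn g Pt p I x) = dd (\<lambda>q. fst (I q)) p x - gin g p (fst (snd (I p))) x"
  "fst (snd (tconn g Pt p I x)) = cov g p (\<lambda>q. fst (snd (I q))) x
      + fst (I p) *\<^sub>R (ginv g p *v ((\<chi> i j. Pt p i j) *v x)) + snd (snd (I p)) *\<^sub>R x"
  "snd (snd (tconn g Pt p I x))
      = dd (\<lambda>q. snd (snd (I q))) p x - x \<bullet> ((\<chi> i j. Pt p i j) *v fst (snd (I p)))"
  by (simp_all add: tconn_def Let_def)

lemma tconn_perturb:
  fixes T :: "real^'n::finite^'n"
  assumes G: "transpose (g p) = g p" "ginv g p ** g p = mat 1" and T: "transpose T = T"
    and Pt': "(\<chi> i j. Pt' p i j) = (\<chi> i j. Pt p i j) - c *\<^sub>R T"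
    and B: "fst B = 0" "g p *v fst (snd B) = T *v x"
  shows "tconn g Pt' p I x = tconn g Pt p I x + c *\<^sub>R tcontr g p (I p) B (Xtr p)"
proof -
  obtain b \<beta> where B_eq: "B = (0, b, \<beta>)" using B(1) by (metis prod.collapse)
  have b: "ginv g p *v (T *v x) = b"
    using B(2) G(2) by (metis B_eq fst_conv snd_conv matrix_vector_mul_assoc matrix_vector_mul_lid)
  have Pt'_mult: "(\<chi> i j. Pt' p i j) *v y = (\<chi> i j. Pt p i j) *v y - c *\<^sub>R (T *v y)" for y
    by (simp add: Pt' matrix_vector_mult_diff_rdistrib scaleR_matrix_vector_assoc)
  have bot: "x \<bullet> (T *v fst (snd (I p))) = gin g p b (fst (snd (I p)))"
    using B(2) dot_symmetric_matrix[OF T] dot_symmetric_matrix[OF G(1)]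
    by (simp add: B_eq gin_def)
  have gin0: "gin g p 0 w = 0" for w by (simp add: gin_def)
  show ?thesis
    using b bot
    by (simp add: prod_eq_iff tconn_components Pt'_mult B_eq tcontr_def tmetric_def Xtr_def gin0
        inner_diff_right algebra_simps)
qed

lemma dimn_eq: "dimn TYPE('n::finite) = real CARD('n)"
  by (simp add: dimn_def)

lemma Jtr_eq:
  fixes g :: "real^'n::finite \<Rightarrow> real^'n^'n"
  shows "Jtr g v q = (v q, grad g v q, - (lap g v q + Jsc g q * v q) / real CARD('n))"
  by (simp add: Jtr_def dimn_eq)

lemma tconn_Xtr: "tconn g Pt p Xtr x = (0, x, 0)"
  by (simp add: tconn_def Let_def Xtr_def dd_const cov_def gin_def vec_eq_iff)

section \<open>The W-tractor connection\<close>

text \<open>\<open>Bcoeff\<close> is the coefficient of \<open>\<nabla>\<^sub>xX\<close> in \<open>B\<^sub>x\<close>; \<open>Btensor\<close> is the middle slot of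
  \<open>B\<^sub>x\<close> with its index lowered, \<open>\<nabla>\<^sup>2v + v P + (\<rho> + Bcoeff) g\<close>, where \<open>\<rho>\<close> is the bottom
  slot of the tractor \<open>J\<close>.\<close>

definition Bcoeff :: "(real^'n::finite \<Rightarrow> real^'n^'n) \<Rightarrow> (real^'n \<Rightarrow> real) \<Rightarrow> real \<Rightarrow> real \<Rightarrow> real^'n \<Rightarrow> real"
  where "Bcoeff g v m \<mu> p
    = (\<mu> - (m - 1) * tmetric g p (Jtr g v p) (Jtr g v p)) / (2 * (m + dimn TYPE('n) - 1) * v p)"

definition Btensor :: "(real^'n::finite \<Rightarrow> real^'n^'n) \<Rightarrow> (real^'n \<Rightarrow> real) \<Rightarrow> real \<Rightarrow> real \<Rightarrow> real^'n \<Rightarrow> real^'n^'n"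
  where "Btensor g v m \<mu> p = (\<chi> i j. hess g v p i j + v p * Sch g p i j
    + (snd (snd (Jtr g v p)) + Bcoeff g v m \<mu> p) * g p $ i $ j)"

lemma scms_scalar_identity:
  fixes n m v Sc L N \<mu> :: real
  assumes "n \<noteq> 0" "n - 1 \<noteq> 0" "m + n - 1 \<noteq> 0" "v \<noteq> 0"
  defines "J \<equiv> Sc / (2 * (n - 1))"
  defines "\<rho> \<equiv> - (L + J * v) / n"
  defines "W \<equiv> ((Sc - 2 * m / v * L - m * (m - 1) / v\<^sup>2 * N) + m * \<mu> / v\<^sup>2) / (2 * (m + n - 1))"
  defines "\<kappa> \<equiv> (\<mu> - (m - 1) * (2 * v * \<rho> + N)) / (2 * (m + n - 1) * v)"
  shows "J - W = - (m / v) * (\<rho> + \<kappa>)"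
proof -
  define a where "a = m + n - 1"
  have a: "a \<noteq> 0" using assms(3) by (simp add: a_def)
  have J: "2 * (n - 1) * J = Sc" unfolding J_def using assms(2) by simp
  have \<rho>: "n * \<rho> = - (L + J * v)" unfolding \<rho>_def using assms(1) by simp
  have W: "2 * a * v\<^sup>2 * W = v\<^sup>2 * Sc - 2 * m * v * L - m * (m - 1) * N + m * \<mu>"
    unfolding W_def a_def[symmetric] using a assms(4) by (simp add: field_simps power2_eq_square)
  have \<kappa>: "2 * a * v * \<kappa> = \<mu> - (m - 1) * (2 * v * \<rho> + N)"
    unfolding \<kappa>_def a_def[symmetric] using a assms(4) by (simp add: field_simps)
  have "2 * a * v\<^sup>2 * (J - W + (m / v) * (\<rho> + \<kappa>))
      = 2 * a * v\<^sup>2 * J - 2 * a * v\<^sup>2 * W + 2 * a * v * m * \<rho> + m * (2 * a * v * \<kappa>)"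
    using assms(4) by (simp add: field_simps power2_eq_square)
  also have "\<dots> = 2 * m * v * (n * \<rho> + L + J * v) + v\<^sup>2 * (2 * (n - 1) * J - Sc)"
    unfolding W \<kappa> unfolding a_def by (simp add: algebra_simps power2_eq_square)
  also have "\<dots> = 0" using J \<rho> by simp
  finally have "J - W + (m / v) * (\<rho> + \<kappa>) = 0" using a assms(4) by simp
  then show ?thesis by (simp add: algebra_simps)
qed

lemma scms_entry_identity:
  fixes n m v R S h gg J W c r :: real
  assumes "n - 2 \<noteq> 0" "m + n - 2 \<noteq> 0" "v \<noteq> 0"
    and "S = (R - J * gg) / (n - 2)" "J - W = - (m / v) * r" "c = m / (v * (m + n - 2))"
  shows "((R - m / v * h) - W * gg) / (m + n - 2) = S - c * (h + v * S + r * gg)"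
proof -
  have R: "R = (n - 2) * S + J * gg" using assms(1,4) by (simp add: field_simps)
  have W: "W = J + (m / v) * r" using assms(5) by simp
  have "(R - m / v * h) - W * gg = (m + n - 2) * S - (m / v) * (h + v * S + r * gg)"
    unfolding R W using assms(3) by (simp add: algebra_simps)
  then show ?thesis using assms(2,6) by (simp add: diff_divide_distrib mult.commute)
qed

context riem_chart
begin

lemma dd_eq_gin_grad:
  assumes "v differentiable (at p)"
  shows "dd v p x = gin g p (grad g v p) x"
proof -
  have "dd v p x = (\<chi> j. pd v j p) \<bullet> x"
    by (simp add: dd_eq_sum_pd[OF assms] inner_vec_def mult.commute)
  also have "\<dots> = (\<chi> j. pd v j p) \<bullet> (ginv g p *v (g p *v x))"
    by (simp add: matrix_vector_mul_assoc ginv_mult_metric[OF p_in_U])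
  also have "\<dots> = gin g p (grad g v p) x"
    by (simp add: dot_symmetric_matrix[OF transpose_ginv[OF p_in_U]] gin_def grad_def)
  finally show ?thesis .
qed

lemma Btr_eq: "Btr g v m \<mu> p x = tconn g (Sch g) p (Jtr g v) x + Bcoeff g v m \<mu> p *\<^sub>R (0, x, 0)"
  by (simp add: Btr_def Bcoeff_def tconn_Xtr)

lemma fst_Btr:
  assumes "smooth_on U v"
  shows "fst (Btr g v m \<mu> p x) = 0"
  using dd_eq_gin_grad[OF smooth_on_differentiable[OF assms p_in_U]]
  by (simp add: Btr_eq tconn_components Jtr_eq)

lemma transpose_Sch: "transpose (\<chi> i j. Sch g p i j) = (\<chi> i j. Sch g p i j)"
  by (simp add: transpose_def vec_eq_iff Sch_def Ric_sym metric_sym[OF p_in_U])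

lemma transpose_Btensor:
  assumes "smooth_on U v"
  shows "transpose (Btensor g v m \<mu> p) = Btensor g v m \<mu> p"
  using transpose_Sch
  by (simp add: transpose_def vec_eq_iff Btensor_def hess_sym[OF assms] metric_sym[OF p_in_U])

lemma metric_mult_snd_Btr:
  assumes "smooth_on U v"
  shows "g p *v fst (snd (Btr g v m \<mu> p x)) = Btensor g v m \<mu> p *v x"
proof -
  have "fst (snd (Btr g v m \<mu> p x)) = cov g p (grad g v) x + v p *\<^sub>R (ginv g p *v ((\<chi> i j. Sch g p i j) *v x))
      + (snd (snd (Jtr g v p)) + Bcoeff g v m \<mu> p) *\<^sub>R x"
    by (simp add: Btr_eq tconn_components Jtr_eq algebra_simps)
  then have "g p *v fst (snd (Btr g v m \<mu> p x)) = (\<chi> l. \<Sum>i\<in>UNIV. x$i * hess g v p i l)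
      + v p *\<^sub>R ((\<chi> i j. Sch g p i j) *v x) + (snd (snd (Jtr g v p)) + Bcoeff g v m \<mu> p) *\<^sub>R (g p *v x)"
    by (simp add: metric_cov_grad[OF assms] matrix_vector_right_distrib matrix_vector_mult_scaleR
        matrix_vector_mul_assoc matrix_mul_assoc metric_mult_ginv[OF p_in_U])
  then show ?thesis
    by (simp add: Btensor_def vec_eq_iff matrix_vector_mult_def hess_sym[OF assms]
        sum.distrib sum_distrib_left algebra_simps)
qed

lemma Jsc_minus_JW:
  assumes "CARD('n) \<ge> 2" "m + real CARD('n) - 1 \<noteq> 0" "v p \<noteq> 0"
  shows "Jsc g p - JW g v m \<mu> p = - (m / v p) * (snd (snd (Jtr g v p)) + Bcoeff g v m \<mu> p)"
proof -
  have "tmetric g p (Jtr g v p) (Jtr g v p) = 2 * v p * snd (snd (Jtr g v p)) + gin g p (grad g v p) (grad g v p)"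
    by (simp add: tmetric_def Jtr_eq)
  then show ?thesis
    using scms_scalar_identity[of "real CARD('n)" m "v p" "Scal g p" "lap g v p"
        "gin g p (grad g v p) (grad g v p)" \<mu>] assms
    by (simp add: Jsc_def JW_def R_phi_def Bcoeff_def Jtr_eq dimn_eq)
qed

lemma PW_eq_Sch_minus_Btensor:
  assumes "CARD('n) \<ge> 3" "m + real CARD('n) - 1 \<noteq> 0" "m + real CARD('n) - 2 \<noteq> 0" "v p \<noteq> 0"
  shows "(\<chi> i j. PW g v m \<mu> p i j)
    = (\<chi> i j. Sch g p i j) - (m / (v p * (m + real CARD('n) - 2))) *\<^sub>R Btensor g v m \<mu> p"
proof -
  have "PW g v m \<mu> p i j = Sch g p i j - m / (v p * (m + real CARD('n) - 2))
      * (hess g v p i j + v p * Sch g p i j + (snd (snd (Jtr g v p)) + Bcoeff g v m \<mu> p) * g p $ i $ j)"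
    for i j
    unfolding PW_def Ric_phi_def dimn_eq
    using assms Jsc_minus_JW[where m = m and \<mu> = \<mu>]
    by (intro scms_entry_identity[where J = "Jsc g p"]) (simp_all add: Sch_def dimn_eq)
  then show ?thesis by (simp add: vec_eq_iff Btensor_def)
qed

end

theorem lemma5p8:
  fixes U :: "(real^'n::finite) set"
    and g :: "real^'n \<Rightarrow> real^'n^'n"
    and v :: "real^'n \<Rightarrow> real"
    and m \<mu> :: real
    and I :: "real^'n \<Rightarrow> 'n tractor"
  assumes "CARD('n) \<ge> 3"
    and "m \<notin> {- real CARD('n), 1 - real CARD('n), 2 - real CARD('n)}"
    and "open U"
    and "riem_metric_on U g"
    and "smooth_on U v" and "\<forall>q\<in>U. v q > 0"
    and "smooth_on U (\<lambda>q. fst (I q))" and "smooth_vf_on U (\<lambda>q. fst (snd (I q)))"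
    and "smooth_on U (\<lambda>q. snd (snd (I q)))"
    and "p \<in> U"
  shows "tconn g (PW g v m \<mu>) p I x =
           tconn g (Sch g) p I x
           + (m / (v p * (m + real CARD('n) - 2))) *\<^sub>R tcontr g p (I p) (Btr g v m \<mu> p x) (Xtr p)"
proof -
  interpret riem_chart U g p using assms(3,4,10) by unfold_locales
  have m: "m + real CARD('n) - 1 \<noteq> 0" "m + real CARD('n) - 2 \<noteq> 0" using assms(2) by auto
  have "v p \<noteq> 0" using assms(6,10) by fastforce
  show ?thesis
  proof (rule tconn_perturb)
    show "transpose (g p) = g p" "ginv g p ** g p = mat 1"
      using transpose_metric ginv_mult_metric p_in_U by blast+
    show "transpose (Btensor g v m \<mu> p) = Btensor g v m \<mu> p"
      using transpose_Btensor[OF assms(5)] .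
    show "(\<chi> i j. PW g v m \<mu> p i j)
        = (\<chi> i j. Sch g p i j) - (m / (v p * (m + real CARD('n) - 2))) *\<^sub>R Btensor g v m \<mu> p"
      using PW_eq_Sch_minus_Btensor[where v = v, OF assms(1) m \<open>v p \<noteq> 0\<close>] .
    show "fst (Btr g v m \<mu> p x) = 0" "g p *v fst (snd (Btr g v m \<mu> p x)) = Btensor g v m \<mu> p *v x"
      using fst_Btr metric_mult_snd_Btr assms(5) by blast+
  qed
qed

end
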